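(* Let $C_{\mathsf{Bern}}>0$. There exist constants $c>0$ and $N_0$, depending only on $C_{\mathsf{Bern}}$, such that for every $n\ge N_0$ and every function $f\colon\{0,1\}^n\to\mathbb R$ satisfying \[\sup_{p\in[0,1]}\mathbb E_{X\sim\mathrm{Bern}(p)^{\otimes n}}|f(X)-p|\le\frac{C_{\mathsf{Bern}}}{\sqrt n},\] and every $\eta\in(0,1)$ with $\lfloor\eta n\rfloor\ge1$, we have \[\sup_{p\in[0,1]}\mathbb E_{X\sim\mathrm{Bern}(p)^{\otimes n}}[S^f_\eta(X)]\ge c\,\eta.\]
   Context: For $x,y\in\{0,1\}^n$, $d_H(x,y)=\#\{i: x_i\ne y_i\}$. For $f\colon\{0,1\}^n\to\mathbb R$ and $\eta\in(0,1)$, $S^f_\eta(x)=\sup_{y\in\{0,1\}^n\colon d_H(x,y)\le\lfloor\eta n\rfloor}|f(y)-f(x)|$. *)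

theory Defs
  imports "HOL-Analysis.Analysis"
begin

text \<open>Points of the cube {0,1}^n are encoded as subsets x of {..<n}
  (x = set of coordinates equal to 1).\<close>

definition cube :: "nat \<Rightarrow> nat set set" where
  "cube n = Pow {..<n}"

definition hamming :: "nat set \<Rightarrow> nat set \<Rightarrow> nat" where
  "hamming x y = card ((x - y) \<union> (y - x))"

definition bern_weight :: "nat \<Rightarrow> real \<Rightarrow> nat set \<Rightarrow> real" where
  "bern_weight n p x = p ^ card x * (1 - p) ^ (n - card x)"

definition bern_exp :: "nat \<Rightarrow> real \<Rightarrow> (nat set \<Rightarrow> real) \<Rightarrow> real" where
  "bern_exp n p g = (\<Sum>x\<in>cube n. bern_weight n p x * g x)"

text \<open>Sensitivity S^f_\<eta>(x) = sup over y in the cube with d_H(x,y) \<le> floor(\<eta> n)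
  of |f y - f x| (the set is finite and nonempty since it contains x).\<close>
definition sens :: "nat \<Rightarrow> real \<Rightarrow> (nat set \<Rightarrow> real) \<Rightarrow> nat set \<Rightarrow> real" where
  "sens n \<eta> f x = Max ((\<lambda>y. \<bar>f y - f x\<bar>) ` {y \<in> cube n. real (hamming x y) \<le> of_int \<lfloor>\<eta> * real n\<rfloor>})"

end

theory Submission
  imports Defs
begin

text \<open>Draw p uniformly from [0,1]. Under this mixture the Hamming weight of X is uniform on
  {0..n} and X is uniform on each weight class, so the supremum over p dominates the mean over
  the levels j of the level averages G j of the sensitivity, while the hypothesis says that the
  level averages F j of f are within (n + 1) C / sqrt n, in l1, of Laplace's (j + 1) / (n + 2).
  Double counting the pairs X \<subseteq> Y between levels j and j + s, with s \<le> floor (\<eta> n), gives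
  F (j + s) - F j \<le> G j. Chaining this about n / (2 s) times and summing over j, the linear growth
  of (j + 1) / (n + 2) forces the sum of the G j to be of order s, so the mixture expectation
  of the sensitivity is of order s / n, i.e. of order \<eta>.\<close>

lemma has_integral_beta_nat:
  "((\<lambda>t::real. t ^ a * (1 - t) ^ b) has_integral (fact a * fact b / fact (a + b + 1))) {0..1}"
proof -
  have "((\<lambda>t. t powr (real (a + 1) - 1) * (1 - t) powr (real (b + 1) - 1))
          has_integral Beta (real (a + 1)) (real (b + 1))) {0<..<1}"
    using has_integral_Beta_real[of "real (a + 1)" "real (b + 1)"]
    by (simp add: has_integral_Icc_iff_Ioo)
  then have "((\<lambda>t::real. t ^ a * (1 - t) ^ b) has_integral Beta (real (a + 1)) (real (b + 1))) {0<..<1}"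
    by (rule has_integral_cong[THEN iffD1, rotated]) (simp add: powr_realpow)
  moreover have "Beta (real (a + 1)) (real (b + 1)) = fact a * fact b / fact (a + b + 1)"
    by (simp add: Beta_def add_ac Gamma_fact[symmetric])
  ultimately show ?thesis
    by (simp add: has_integral_Icc_iff_Ioo)
qed

text \<open>The law of X when p is first drawn uniformly from [0,1].\<close>
definition mix_weight :: "nat \<Rightarrow> nat set \<Rightarrow> real" where
  "mix_weight n x = 1 / ((real n + 1) * real (n choose card x))"

text \<open>Laplace's rule of succession: the posterior mean of p given j successes in n trials
  under the uniform prior.\<close>
definition laplace_mean :: "nat \<Rightarrow> nat \<Rightarrow> real" where
  "laplace_mean n j = (real j + 1) / (real n + 2)"

lemma finite_cube: "finite (cube n)"
  unfolding cube_def by simp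

lemma card_le_of_mem_cube: "x \<in> cube n \<Longrightarrow> card x \<le> n"
  unfolding cube_def by (metis PowD card_lessThan card_mono finite_lessThan)

lemma bern_weight_nonneg: "p \<in> {0..1} \<Longrightarrow> 0 \<le> bern_weight n p x"
  unfolding bern_weight_def by auto

lemma bern_weight_le_one: "p \<in> {0..1} \<Longrightarrow> bern_weight n p x \<le> 1"
  unfolding bern_weight_def by (auto intro!: mult_le_one power_le_one)

lemma mix_weight_nonneg: "0 \<le> mix_weight n x"
  unfolding mix_weight_def by simp

lemma has_integral_bern_weight:
  assumes "card x \<le> n"
  shows "((\<lambda>p. bern_weight n p x) has_integral mix_weight n x) {0..1}"
proof -
  have "fact (card x) * fact (n - card x) / fact (n + 1) = mix_weight n x"
    using assms by (simp add: mix_weight_def binomial_fact field_simps)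
  then show ?thesis
    using has_integral_beta_nat[of "card x" "n - card x"] assms by (simp add: bern_weight_def)
qed

lemma has_integral_bern_weight_mult:
  assumes "card x \<le> n"
  shows "((\<lambda>p. bern_weight n p x * p) has_integral (mix_weight n x * laplace_mean n (card x))) {0..1}"
proof -
  have "fact (card x + 1) * fact (n - card x) / fact (n + 2) = mix_weight n x * laplace_mean n (card x)"
    using assms by (simp add: mix_weight_def laplace_mean_def binomial_fact field_simps numeral_2_eq_2)
  moreover have "card x + 1 + (n - card x) + 1 = n + 2"
    using assms by simp
  ultimately show ?thesis
    using has_integral_beta_nat[of "card x + 1" "n - card x"]
    by (simp add: bern_weight_def algebra_simps)
qed

lemma has_integral_bern_exp:
  "((\<lambda>p. bern_exp n p g) has_integral (\<Sum>x\<in>cube n. mix_weight n x * g x)) {0..1}"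
  unfolding bern_exp_def
  by (intro has_integral_sum finite_cube has_integral_mult_left has_integral_bern_weight
      card_le_of_mem_cube)

lemma mix_average_le_SUP_bern_exp:
  assumes "\<And>x. x \<in> cube n \<Longrightarrow> 0 \<le> g x"
  shows "(\<Sum>x\<in>cube n. mix_weight n x * g x) \<le> (SUP p\<in>{0..1::real}. bern_exp n p g)"
proof -
  have "bdd_above ((\<lambda>p. bern_exp n p g) ` {0..1})"
  proof (rule bdd_aboveI2)
    fix p :: real
    assume "p \<in> {0..1}"
    then show "bern_exp n p g \<le> (\<Sum>x\<in>cube n. g x)"
      unfolding bern_exp_def
      by (intro sum_mono) (metis assms bern_weight_le_one bern_weight_nonneg mult_left_le_one_le)
  qed
  then have "bern_exp n p g \<le> (SUP p\<in>{0..1::real}. bern_exp n p g)" if "p \<in> {0..1}" for p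
    using that by (rule cSUP_upper2) simp
  then show ?thesis
    using has_integral_le[OF has_integral_bern_exp has_integral_const_real] by simp
qed

lemma mix_average_abs_deviation_le:
  assumes "\<forall>p\<in>{0..1}. bern_exp n p (\<lambda>x. \<bar>f x - p\<bar>) \<le> B"
  shows "(\<Sum>x\<in>cube n. mix_weight n x * \<bar>f x - laplace_mean n (card x)\<bar>) \<le> B"
proof -
  define J where "J x = integral {0..1} (\<lambda>p. bern_weight n p x * \<bar>f x - p\<bar>)" for x
  have int_J: "((\<lambda>p. bern_weight n p x * \<bar>f x - p\<bar>) has_integral J x) {0..1}" for x
    unfolding J_def bern_weight_def
    by (intro integrable_integral integrable_continuous_real continuous_intros)
  have "mix_weight n x * \<bar>f x - laplace_mean n (card x)\<bar> \<le> J x" if "x \<in> cube n" for x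
  proof -
    have int_dev: "((\<lambda>p. bern_weight n p x * (f x - p))
            has_integral mix_weight n x * (f x - laplace_mean n (card x))) {0..1}"
      using has_integral_diff[OF has_integral_mult_left[OF has_integral_bern_weight]
          has_integral_bern_weight_mult] card_le_of_mem_cube[OF that]
      by (simp add: algebra_simps)
    then have "\<bar>mix_weight n x * (f x - laplace_mean n (card x))\<bar>
        = norm (integral {0..1} (\<lambda>p. bern_weight n p x * (f x - p)))"
      by (simp add: integral_unique)
    also have "\<dots> \<le> J x"
      unfolding J_def using int_J int_dev
      by (intro integral_norm_bound_integral)
        (auto simp: abs_mult bern_weight_nonneg has_integral_integrable)
    finally have "\<bar>mix_weight n x * (f x - laplace_mean n (card x))\<bar> \<le> J x" .
    then show ?thesis
      by (simp add: abs_mult mix_weight_nonneg)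
  qed
  then have "(\<Sum>x\<in>cube n. mix_weight n x * \<bar>f x - laplace_mean n (card x)\<bar>) \<le> (\<Sum>x\<in>cube n. J x)"
    by (rule sum_mono)
  also have "\<dots> \<le> B"
    using has_integral_le[OF has_integral_sum[OF finite_cube int_J] has_integral_const_real] assms
    by (simp add: bern_exp_def)
  finally show ?thesis .
qed

definition level :: "nat \<Rightarrow> nat \<Rightarrow> nat set set" where
  "level n j = {x \<in> cube n. card x = j}"

definition level_mean :: "nat \<Rightarrow> (nat set \<Rightarrow> real) \<Rightarrow> nat \<Rightarrow> real" where
  "level_mean n g j = (\<Sum>x\<in>level n j. g x) / real (n choose j)"

lemma finite_level: "finite (level n j)"
  unfolding level_def using finite_cube by simp

lemma card_level: "card (level n j) = n choose j"
proof -
  have "level n j = {x. x \<subseteq> {..<n} \<and> card x = j}"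
    unfolding level_def cube_def by auto
  then show ?thesis
    using n_subsets[of "{..<n}" j] by simp
qed

lemma sum_cube_by_level: "(\<Sum>x\<in>cube n. h x) = (\<Sum>j\<le>n. \<Sum>x\<in>level n j. h x)"
  unfolding level_def by (rule sum.group[symmetric]) (auto simp: finite_cube card_le_of_mem_cube)

lemma level_mean_nonneg:
  "(\<And>x. x \<in> level n j \<Longrightarrow> 0 \<le> g x) \<Longrightarrow> 0 \<le> level_mean n g j"
  unfolding level_mean_def by (simp add: sum_nonneg)

lemma abs_level_mean_le: "\<bar>level_mean n g j\<bar> \<le> level_mean n (\<lambda>x. \<bar>g x\<bar>) j"
  unfolding level_mean_def by (simp add: divide_right_mono sum_abs)

lemma level_mean_diff_const:
  assumes "j \<le> n"
  shows "level_mean n (\<lambda>x. g x - c) j = level_mean n g j - c"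
  using assms by (simp add: level_mean_def sum_subtractf card_level field_simps)

lemma sum_mix_weight_eq_level_means:
  "(\<Sum>x\<in>cube n. mix_weight n x * g x) = (\<Sum>j\<le>n. level_mean n g j) / (real n + 1)"
proof -
  have "(\<Sum>x\<in>level n j. mix_weight n x * g x) = level_mean n g j / (real n + 1)" for j
    by (simp add: level_def mix_weight_def level_mean_def sum_divide_distrib mult.commute)
  then show ?thesis
    by (simp add: sum_cube_by_level sum_divide_distrib)
qed

lemma sum_level_mean_deviation_le:
  assumes "\<forall>p\<in>{0..1}. bern_exp n p (\<lambda>x. \<bar>f x - p\<bar>) \<le> B"
  shows "(\<Sum>j\<le>n. \<bar>level_mean n f j - laplace_mean n j\<bar>) \<le> (real n + 1) * B"
proof -
  let ?dev = "\<lambda>x. f x - laplace_mean n (card x)"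
  have "level_mean n f j - laplace_mean n j = level_mean n ?dev j" if "j \<le> n" for j
  proof -
    have "level_mean n ?dev j = level_mean n (\<lambda>x. f x - laplace_mean n j) j"
      by (simp add: level_mean_def level_def)
    then show ?thesis
      using level_mean_diff_const[OF that] by simp
  qed
  then have "(\<Sum>j\<le>n. \<bar>level_mean n f j - laplace_mean n j\<bar>)
      \<le> (\<Sum>j\<le>n. level_mean n (\<lambda>x. \<bar>?dev x\<bar>) j)"
    by (intro sum_mono) (simp add: abs_level_mean_le)
  also have "\<dots> = (real n + 1) * (\<Sum>x\<in>cube n. mix_weight n x * \<bar>?dev x\<bar>)"
    by (simp add: sum_mix_weight_eq_level_means)
  also have "\<dots> \<le> (real n + 1) * B"
    using mix_average_abs_deviation_le[OF assms] by simp
  finally show ?thesis .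
qed

lemma card_supersets_in_level:
  assumes "X \<in> level n j"
  shows "card {Y \<in> level n (j + s). X \<subseteq> Y} = (n - j) choose s"
proof -
  have X: "X \<subseteq> {..<n}" "card X = j" "finite X"
    using assms unfolding level_def cube_def by (auto intro: finite_subset)
  have "{Y \<in> level n (j + s). X \<subseteq> Y} = (\<lambda>Z. X \<union> Z) ` {Z. Z \<subseteq> {..<n} - X \<and> card Z = s}"
  proof (intro set_eqI iffI)
    fix Y
    assume "Y \<in> {Y \<in> level n (j + s). X \<subseteq> Y}"
    then have "Y \<subseteq> {..<n}" "card Y = j + s" "X \<subseteq> Y" "finite Y"
      unfolding level_def cube_def by (auto intro: finite_subset)
    then have "Y - X \<subseteq> {..<n} - X" "card (Y - X) = s" "Y = X \<union> (Y - X)"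
      using X by (auto simp: card_Diff_subset)
    then show "Y \<in> (\<lambda>Z. X \<union> Z) ` {Z. Z \<subseteq> {..<n} - X \<and> card Z = s}"
      by blast
  next
    fix Y
    assume "Y \<in> (\<lambda>Z. X \<union> Z) ` {Z. Z \<subseteq> {..<n} - X \<and> card Z = s}"
    then obtain Z where Z: "Z \<subseteq> {..<n} - X" "card Z = s" "Y = X \<union> Z"
      by blast
    moreover have "finite Z" "X \<inter> Z = {}"
      using Z(1) finite_subset by auto
    ultimately have "card Y = j + s"
      using X by (simp add: card_Un_disjoint)
    then show "Y \<in> {Y \<in> level n (j + s). X \<subseteq> Y}"
      using Z X unfolding level_def cube_def by auto
  qed
  moreover have "inj_on (\<lambda>Z. X \<union> Z) {Z. Z \<subseteq> {..<n} - X \<and> card Z = s}"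
    by (rule inj_onI) blast
  moreover have "card {Z. Z \<subseteq> {..<n} - X \<and> card Z = s} = (n - j) choose s"
    using n_subsets[of "{..<n} - X" s] X by (simp add: card_Diff_subset)
  ultimately show ?thesis
    by (simp add: card_image)
qed

lemma card_subsets_in_level:
  assumes "Y \<in> level n (j + s)"
  shows "card {X \<in> level n j. X \<subseteq> Y} = (j + s) choose j"
proof -
  have Y: "Y \<subseteq> {..<n}" "card Y = j + s" "finite Y"
    using assms unfolding level_def cube_def by (auto intro: finite_subset)
  then have "{X \<in> level n j. X \<subseteq> Y} = {X. X \<subseteq> Y \<and> card X = j}"
    unfolding level_def cube_def by auto
  then show ?thesis
    using n_subsets[of Y j] Y by simp
qed

lemma sum_superset_pairs_fst:
  "(\<Sum>X\<in>level n j. \<Sum>Y\<in>{Y \<in> level n (j + s). X \<subseteq> Y}. h X)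
    = real ((n - j) choose s) * (\<Sum>X\<in>level n j. h X)"
  by (simp add: card_supersets_in_level sum_distrib_left)

lemma sum_superset_pairs_snd:
  "(\<Sum>X\<in>level n j. \<Sum>Y\<in>{Y \<in> level n (j + s). X \<subseteq> Y}. h Y)
    = real ((j + s) choose j) * (\<Sum>Y\<in>level n (j + s). h Y)"
proof -
  have "(\<Sum>X\<in>level n j. \<Sum>Y\<in>{Y \<in> level n (j + s). X \<subseteq> Y}. h Y)
      = (\<Sum>Y\<in>level n (j + s). \<Sum>X\<in>{X \<in> level n j. X \<subseteq> Y}. h Y)"
    by (rule sum.swap_restrict) (auto simp: finite_level)
  then show ?thesis
    by (simp add: card_subsets_in_level sum_distrib_left)
qed

text \<open>Averaging over the pairs X \<subseteq> Y from levels j and j + s, either coordinate is uniform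
  on its level.\<close>
lemma level_mean_shift_le:
  assumes "j + s \<le> n"
    and bound: "\<And>X Y. X \<in> level n j \<Longrightarrow> Y \<in> level n (j + s) \<Longrightarrow> X \<subseteq> Y \<Longrightarrow> \<bar>g Y - g X\<bar> \<le> h X"
  shows "\<bar>level_mean n g (j + s) - level_mean n g j\<bar> \<le> level_mean n h j"
proof -
  define up where "up X = {Y \<in> level n (j + s). X \<subseteq> Y}" for X
  define a where "a = real (n choose j)"
  define b where "b = real ((n - j) choose s)"
  define c where "c = real (n choose (j + s))"
  define d where "d = real ((j + s) choose j)"
  have pos: "a > 0" "b > 0" "c > 0" "d > 0"
    unfolding a_def b_def c_def d_def using assms(1) by auto
  have "a * b = c * d"
    using choose_mult[of j "j + s" n] assms(1) unfolding a_def b_def c_def d_def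
    by (metis add_diff_cancel_left' le_add1 of_nat_mult)
  then have "level_mean n g (j + s) - level_mean n g j
      = (\<Sum>X\<in>level n j. \<Sum>Y\<in>up X. g Y - g X) / (a * b)"
    using pos unfolding level_mean_def up_def sum_subtractf sum_superset_pairs_fst
      sum_superset_pairs_snd a_def [symmetric] b_def [symmetric] c_def [symmetric] d_def [symmetric]
    by (simp add: field_simps)
  also have "\<bar>\<dots>\<bar> \<le> (\<Sum>X\<in>level n j. \<Sum>Y\<in>up X. h X) / (a * b)"
  proof -
    have "\<bar>\<Sum>X\<in>level n j. \<Sum>Y\<in>up X. g Y - g X\<bar> \<le> (\<Sum>X\<in>level n j. \<Sum>Y\<in>up X. h X)"
      by (intro order_trans[OF sum_abs] sum_mono) (auto simp: up_def bound)
    then show ?thesis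
      using pos by (simp add: divide_right_mono)
  qed
  also have "\<dots> = level_mean n h j"
    using pos unfolding up_def sum_superset_pairs_fst level_mean_def a_def [symmetric] b_def [symmetric]
    by simp
  finally show ?thesis .
qed

lemma hamming_subset: "finite Y \<Longrightarrow> X \<subseteq> Y \<Longrightarrow> hamming X Y = card Y - card X"
  unfolding hamming_def by (simp add: Diff_eq_empty_iff [THEN iffD2] card_Diff_subset finite_subset)

lemma abs_diff_le_sens:
  assumes "X \<in> cube n" "Y \<in> cube n" "real (hamming X Y) \<le> of_int \<lfloor>\<eta> * real n\<rfloor>"
  shows "\<bar>f Y - f X\<bar> \<le> sens n \<eta> f X"
  unfolding sens_def by (rule Max_ge) (use assms finite_cube in auto)

lemma sens_nonneg:
  assumes "X \<in> cube n" "0 \<le> \<lfloor>\<eta> * real n\<rfloor>"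
  shows "0 \<le> sens n \<eta> f X"
  using abs_diff_le_sens[OF assms(1) assms(1), of \<eta> f] assms by (simp add: hamming_def)

lemma telescope_le:
  fixes F G :: "nat \<Rightarrow> real"
  assumes step: "\<And>j. j + s \<le> n \<Longrightarrow> F (j + s) - F j \<le> G j"
  shows "j + t * s \<le> n \<Longrightarrow> F (j + t * s) - F j \<le> (\<Sum>i<t. G (j + i * s))"
proof (induction t)
  case 0
  then show ?case by simp
next
  case (Suc t)
  then have "F (j + t * s + s) - F (j + t * s) \<le> G (j + t * s)"
    and "F (j + t * s) - F j \<le> (\<Sum>i<t. G (j + i * s))"
    using step[of "j + t * s"] by (simp_all add: algebra_simps)
  then show ?case
    by (simp add: algebra_simps)
qed

lemma sum_shift_le:
  fixes G :: "nat \<Rightarrow> real"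
  assumes nonneg: "\<And>j. j \<le> n \<Longrightarrow> 0 \<le> G j" and "m + a \<le> n"
  shows "(\<Sum>j\<le>m. G (j + a)) \<le> (\<Sum>j\<le>n. G j)"
proof -
  have "(\<Sum>j\<le>m. G (j + a)) = (\<Sum>j\<in>(\<lambda>j. j + a) ` {..m}. G j)"
    by (subst sum.reindex) (auto simp: inj_on_def)
  also have "\<dots> \<le> (\<Sum>j\<le>n. G j)"
    by (rule sum_mono2) (use assms in auto)
  finally show ?thesis .
qed

lemma sum_increments_le:
  fixes F G :: "nat \<Rightarrow> real"
  assumes step: "\<And>j. j + s \<le> n \<Longrightarrow> F (j + s) - F j \<le> G j"
    and nonneg: "\<And>j. j \<le> n \<Longrightarrow> 0 \<le> G j"
    and "t * s \<le> n"
  shows "(\<Sum>j\<le>n - t * s. F (j + t * s) - F j) \<le> real t * (\<Sum>j\<le>n. G j)"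
proof -
  have "(\<Sum>j\<le>n - t * s. F (j + t * s) - F j) \<le> (\<Sum>j\<le>n - t * s. \<Sum>i<t. G (j + i * s))"
    using assms(3) telescope_le[of s n F G, OF step] by (intro sum_mono) auto
  also have "\<dots> = (\<Sum>i<t. \<Sum>j\<le>n - t * s. G (j + i * s))"
    by (rule sum.swap)
  also have "\<dots> \<le> (\<Sum>i<t. \<Sum>j\<le>n. G j)"
  proof (intro sum_mono sum_shift_le nonneg)
    fix i
    assume "i \<in> {..<t}"
    then have "i * s \<le> t * s" by simp
    then show "n - t * s + i * s \<le> n" using assms(3) by linarith
  qed
  finally show ?thesis by simp
qed

lemma sum_increments_ge:
  fixes F :: "nat \<Rightarrow> real"
  assumes dev: "(\<Sum>j\<le>n. \<bar>F j - laplace_mean n j\<bar>) \<le> E" and "2 * T \<le> n"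
  shows "real T / 2 - 2 * E \<le> (\<Sum>j\<le>n - T. F (j + T) - F j)"
proof -
  define d where "d j = F j - laplace_mean n j" for j
  have "(\<Sum>j\<le>n - T. F (j + T) - F j)
      = (\<Sum>j\<le>n - T. laplace_mean n (j + T) - laplace_mean n j)
        + (\<Sum>j\<le>n - T. d (j + T)) - (\<Sum>j\<le>n - T. d j)"
    unfolding d_def by (simp add: sum_subtractf sum.distrib algebra_simps)
  also have "(\<Sum>j\<le>n - T. laplace_mean n (j + T) - laplace_mean n j)
      = real (n - T + 1) * real T / (real n + 2)"
    by (simp add: laplace_mean_def diff_divide_distrib[symmetric])
  finally have incr: "(\<Sum>j\<le>n - T. F (j + T) - F j)
      = real (n - T + 1) * real T / (real n + 2) + (\<Sum>j\<le>n - T. d (j + T)) - (\<Sum>j\<le>n - T. d j)" .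
  have "real T * (2 * real T) \<le> real T * real n"
    using assms(2) by (intro mult_left_mono) auto
  then have main: "real T / 2 \<le> real (n - T + 1) * real T / (real n + 2)"
    using assms(2) by (simp add: field_simps of_nat_diff)
  have err: "\<bar>\<Sum>j\<le>n - T. d (j + a)\<bar> \<le> E" if "a \<le> T" for a
    using order_trans[OF sum_abs sum_shift_le[of n "\<lambda>j. \<bar>d j\<bar>" "n - T" a]] dev that assms(2)
    unfolding d_def by force
  show ?thesis
    using incr main err[OF le0, simplified] err[OF order_refl] unfolding abs_le_iff by linarith
qed

text \<open>The increments over a single step s may be lost in the deviation E, so the step
  inequality is chained t \<approx> n / (2 s) times, comparing F over distances of order n.\<close>
lemma sum_lower_bound_of_increments:
  fixes F G :: "nat \<Rightarrow> real"
  assumes step: "\<And>j. j + s \<le> n \<Longrightarrow> F (j + s) - F j \<le> G j"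
    and nonneg: "\<And>j. j \<le> n \<Longrightarrow> 0 \<le> G j"
    and dev: "(\<Sum>j\<le>n. \<bar>F j - laplace_mean n j\<bar>) \<le> E"
    and "1 \<le> s" "2 * s \<le> n"
  shows "real s / 2 - 8 * E * real s / real n \<le> (\<Sum>j\<le>n. G j)"
proof -
  define t where "t = n div (2 * s)"
  have "1 \<le> t"
    unfolding t_def using div_le_mono[OF assms(5), of "2 * s"] assms(4) by simp
  have "n = t * (2 * s) + n mod (2 * s)" "n mod (2 * s) < 2 * s"
    unfolding t_def using assms(4) by (simp_all only: div_mult_mod_eq) simp
  moreover have "t * (2 * s) = 2 * (t * s)" "s \<le> t * s"
    using \<open>1 \<le> t\<close> by simp_all
  ultimately have "2 * (t * s) \<le> n" and "n \<le> 4 * (t * s)"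
    by linarith+
  then have n_le: "real n \<le> 4 * real t * real s"
    by (metis mult.assoc of_nat_le_iff of_nat_mult of_nat_numeral)
  have "0 \<le> E"
    by (rule order_trans[OF sum_nonneg dev]) simp
  have "real (t * s) / 2 - 2 * E \<le> real t * (\<Sum>j\<le>n. G j)"
    using sum_increments_ge[OF dev \<open>2 * (t * s) \<le> n\<close>] sum_increments_le[of s n F G t, OF step nonneg]
      \<open>2 * (t * s) \<le> n\<close> by simp
  then have "real s / 2 - 2 * E / real t \<le> (\<Sum>j\<le>n. G j)"
    using \<open>1 \<le> t\<close> by (simp add: field_simps)
  moreover have "2 * E / real t \<le> 8 * E * real s / real n"
  proof -
    have "2 * E * real n \<le> 8 * E * real s * real t"
      using mult_left_mono[OF n_le, of "2 * E"] \<open>0 \<le> E\<close> by (simp add: algebra_simps)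
    then show ?thesis
      using \<open>1 \<le> t\<close> assms(4,5) by (simp add: field_simps)
  qed
  ultimately show ?thesis by linarith
qed

lemma SUP_sens_ge:
  assumes hyp: "\<forall>p\<in>{0..1}. bern_exp n p (\<lambda>x. \<bar>f x - p\<bar>) \<le> B"
    and small: "32 * (real n + 1) * B \<le> real n"
    and s: "1 \<le> s" "2 * s \<le> n" "real s \<le> of_int \<lfloor>\<eta> * real n\<rfloor>"
  shows "real s / (4 * (real n + 1)) \<le> (SUP p\<in>{0..1::real}. bern_exp n p (sens n \<eta> f))"
proof -
  let ?F = "level_mean n f" and ?G = "level_mean n (sens n \<eta> f)"
  have "0 \<le> \<lfloor>\<eta> * real n\<rfloor>"
    using s by linarith
  then have sens_nonneg_cube: "0 \<le> sens n \<eta> f x" if "x \<in> cube n" for x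
    using sens_nonneg[OF that] by blast
  have "?F (j + s) - ?F j \<le> ?G j" if "j + s \<le> n" for j
  proof -
    have "\<bar>f Y - f X\<bar> \<le> sens n \<eta> f X"
      if "X \<in> level n j" "Y \<in> level n (j + s)" "X \<subseteq> Y" for X Y
      using that s(3) finite_subset[of Y "{..<n}"]
      by (intro abs_diff_le_sens) (auto simp: level_def cube_def hamming_subset)
    then have "\<bar>?F (j + s) - ?F j\<bar> \<le> ?G j"
      by (rule level_mean_shift_le[OF that])
    then show ?thesis
      by (simp add: abs_le_iff)
  qed
  moreover have "0 \<le> ?G j" for j
    by (intro level_mean_nonneg sens_nonneg_cube) (simp add: level_def)
  ultimately have "real s / 2 - 8 * ((real n + 1) * B) * real s / real n \<le> (\<Sum>j\<le>n. ?G j)"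
    by (rule sum_lower_bound_of_increments[OF _ _ sum_level_mean_deviation_le[OF hyp] s(1,2)])
  moreover have "8 * ((real n + 1) * B) * real s / real n \<le> real s / 4"
    using mult_right_mono[OF small, of "real s"] s(1,2) by (simp add: field_simps)
  ultimately have "real s / 4 / (real n + 1) \<le> (\<Sum>j\<le>n. ?G j) / (real n + 1)"
    by (intro divide_right_mono) auto
  also have "\<dots> \<le> (SUP p\<in>{0..1::real}. bern_exp n p (sens n \<eta> f))"
    using mix_average_le_SUP_bern_exp[of n "sens n \<eta> f"] sens_nonneg_cube
    by (simp add: sum_mix_weight_eq_level_means)
  finally show ?thesis by simp
qed

lemma exists_radius:
  assumes "0 < \<eta>" "\<eta> < 1" "1 \<le> \<lfloor>\<eta> * real n\<rfloor>"
  shows "\<exists>s. 1 \<le> s \<and> 2 * s \<le> n \<and> real s \<le> of_int \<lfloor>\<eta> * real n\<rfloor> \<and> \<eta> * (real n + 1) \<le> 4 * real s"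
proof -
  define K where "K = nat \<lfloor>\<eta> * real n\<rfloor>"
  have K: "real K = of_int \<lfloor>\<eta> * real n\<rfloor>" "1 \<le> K"
    unfolding K_def using assms(3) nat_mono[OF assms(3)] by auto
  then have "\<eta> * real n < real K + 1" "1 \<le> real K"
    by linarith+
  then have "\<eta> * (real n + 1) \<le> 4 * real K"
    using assms(2) by (simp add: algebra_simps)
  have "0 < real n"
    using assms by (cases "n = 0") auto
  then have "\<eta> * real n < real n"
    using assms(2) by simp
  then have "K < n"
    using K of_int_floor_le[of "\<eta> * real n"] by linarith
  consider "K \<le> n div 2" | "n div 2 < K"
    by linarith
  then show ?thesis
  proof cases
    case 1
    then show ?thesis
      using K \<open>\<eta> * (real n + 1) \<le> 4 * real K\<close> by (intro exI[of _ K]) auto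
  next
    case 2
    have "1 \<le> n div 2"
      using K(2) \<open>K < n\<close> div_le_mono[of 2 n 2] by simp
    moreover have "real n \<le> 2 * real (n div 2) + 1"
      by linarith
    ultimately have "\<eta> * (real n + 1) \<le> 4 * real (n div 2)"
      using \<open>\<eta> * real n < real n\<close> assms(2) by (simp add: algebra_simps)
    then show ?thesis
      using 2 K \<open>1 \<le> n div 2\<close> by (intro exI[of _ "n div 2"]) auto
  qed
qed

lemma budget_le_of_sqrt_bound:
  assumes "0 \<le> C" "64 * C \<le> sqrt (real n)" "1 \<le> n"
  shows "32 * (real n + 1) * (C / sqrt (real n)) \<le> real n"
proof -
  have "32 * (real n + 1) * (C / sqrt (real n)) \<le> 64 * real n * (C / sqrt (real n))"
    using assms by (intro mult_right_mono) auto
  also have "\<dots> = 64 * C * (real n / sqrt (real n))"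
    by simp
  also have "\<dots> = 64 * C * sqrt (real n)"
    by (simp add: real_div_sqrt)
  also have "\<dots> \<le> real n"
    using mult_right_mono[OF assms(2), of "sqrt (real n)"] by simp
  finally show ?thesis .
qed

theorem theorem4p1:
  fixes C_Bern :: real
  assumes "C_Bern > 0"
  shows "\<exists>c::real. c > 0 \<and> (\<exists>N0::nat. \<forall>n\<ge>N0. \<forall>f :: nat set \<Rightarrow> real.
           (\<forall>p\<in>{0..1}. bern_exp n p (\<lambda>x. \<bar>f x - p\<bar>) \<le> C_Bern / sqrt (real n)) \<longrightarrow>
           (\<forall>\<eta>::real. 0 < \<eta> \<and> \<eta> < 1 \<and> \<lfloor>\<eta> * real n\<rfloor> \<ge> 1 \<longrightarrow>
              (SUP p\<in>{0..1::real}. bern_exp n p (sens n \<eta> f)) \<ge> c * \<eta>))"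
proof (intro exI conjI allI impI)
  show "(1 / 16 :: real) > 0" by simp
  fix n :: nat and f :: "nat set \<Rightarrow> real" and \<eta> :: real
  assume n: "nat \<lceil>(64 * C_Bern)\<^sup>2\<rceil> \<le> n"
    and hyp: "\<forall>p\<in>{0..1}. bern_exp n p (\<lambda>x. \<bar>f x - p\<bar>) \<le> C_Bern / sqrt (real n)"
    and \<eta>: "0 < \<eta> \<and> \<eta> < 1 \<and> 1 \<le> \<lfloor>\<eta> * real n\<rfloor>"
  obtain s where s: "1 \<le> s" "2 * s \<le> n" "real s \<le> of_int \<lfloor>\<eta> * real n\<rfloor>"
    and \<eta>_le: "\<eta> * (real n + 1) \<le> 4 * real s"
    using exists_radius \<eta> by blast
  have "64 * C_Bern \<le> sqrt (real n)"
    using n by (intro real_le_rsqrt) linarith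
  then have "32 * (real n + 1) * (C_Bern / sqrt (real n)) \<le> real n"
    using assms s(1,2) by (intro budget_le_of_sqrt_bound) auto
  then have "real s / (4 * (real n + 1)) \<le> (SUP p\<in>{0..1::real}. bern_exp n p (sens n \<eta> f))"
    using SUP_sens_ge[OF hyp _ s] by blast
  moreover have "1 / 16 * \<eta> \<le> real s / (4 * (real n + 1))"
    using \<eta>_le by (simp add: field_simps)
  ultimately show "1 / 16 * \<eta> \<le> (SUP p\<in>{0..1::real}. bern_exp n p (sens n \<eta> f))"
    by linarith
qed

end
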